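(* Let $\mathcal{Z}$ be a finite set with probability distribution $\{p_z\}_{z\in\mathcal{Z}}$, let $\rho_z$ ($z\in\mathcal{Z}$) be density matrices on a finite-dimensional Hilbert space $\mathcal{H}^Q$, and let $\langle\rho\rangle=\sum_z p_z\rho_z$. For an integer $M\ge1$ define the states on $(\mathbb{C}^{|\mathcal{Z}|}\otimes\mathcal{H}^Q)^{\otimes M}$ $$\rho_{1,M}=\Big(\sum_z p_z|z\rangle\langle z|\otimes\rho_z\Big)^{\otimes M},\qquad \rho_{2,M}=\Big(\sum_z p_z|z\rangle\langle z|\otimes\langle\rho\rangle\Big)^{\otimes M},$$ which represent coherent access to $M$ independent samples from the ensemble $\mathcal{E}_1=\{(p_z,\rho_z)\}$ and from $\mathcal{E}_2=\{(p_z,\langle\rho\rangle)\}$ respectively (labels stored in classical registers, states in quantum registers). Suppose one of the two is given, each with prior probability $1/2$, and a simulation-free strategy, i.e. a two-outcome POVM $\{E_1,E_2=\mathbb{I}-E_1\}$ satisfying $(\pi_\tau^{\otimes M}\otimes\mathbb{I}_Q)E_1(\pi_\tau^{\otimes M}\otimes\mathbb{I}_Q)^\dagger=E_1$ for every permutation $\tau$ of $\mathcal{Z}$, is used to guess which (outcome $j$ means guessing $\mathcal{E}_j$). Then the success probability $p_{\rm succ}=\tfrac12\operatorname{Tr}[E_1\rho_{1,M}]+\tfrac12\operatorname{Tr}[E_2\rho_{2,M}]$ satisfies $$p_{\rm succ}\le\frac12+M^2\sum_{z\in\mathcal{Z}}p_z^2.$$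
   Context: $\pi_\tau$ is the permutation operator on a single classical register $\mathbb{C}^{|\mathcal{Z}|}$ with $\pi_\tau|z\rangle=|\tau(z)\rangle$, acting on each of the $M$ classical registers, and $\mathbb{I}_Q$ is the identity on all $M$ quantum registers. The POVM may be an arbitrary joint measurement on all $M$ classical and quantum registers (including entangled, adaptive or stochastic strategies); "simulation-free" means the strategy treats all labels $z$ symmetrically, as encoded by the permutation-invariance condition. *)

theory Defs
  imports Complex_Main "HOL-Library.FuncSet"
begin

text \<open>Operators on a finite-dimensional space with orthonormal basis indexed by a
finite set I are represented as functions I \<Rightarrow> I \<Rightarrow> complex (matrix entries);
only entries with both indices in I are meaningful.\<close>

definition mmult :: "'i set \<Rightarrow> ('i \<Rightarrow> 'i \<Rightarrow> complex) \<Rightarrow> ('i \<Rightarrow> 'i \<Rightarrow> complex) \<Rightarrow> ('i \<Rightarrow> 'i \<Rightarrow> complex)" where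
  "mmult I A B = (\<lambda>i k. \<Sum>j\<in>I. A i j * B j k)"

definition adjoint :: "('i \<Rightarrow> 'i \<Rightarrow> complex) \<Rightarrow> ('i \<Rightarrow> 'i \<Rightarrow> complex)" where
  "adjoint A = (\<lambda>i j. cnj (A j i))"

definition idop :: "'i \<Rightarrow> 'i \<Rightarrow> complex" where
  "idop = (\<lambda>i j. if i = j then 1 else 0)"

definition trace :: "'i set \<Rightarrow> ('i \<Rightarrow> 'i \<Rightarrow> complex) \<Rightarrow> complex" where
  "trace I A = (\<Sum>i\<in>I. A i i)"

text \<open>Positive semidefinite: the quadratic form is real and nonnegative for every vector
(over the complex numbers this also forces the operator to be Hermitian).\<close>
definition psd :: "'i set \<Rightarrow> ('i \<Rightarrow> 'i \<Rightarrow> complex) \<Rightarrow> bool" where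
  "psd I A \<longleftrightarrow> (\<forall>v :: 'i \<Rightarrow> complex.
      Im (\<Sum>i\<in>I. \<Sum>j\<in>I. cnj (v i) * A i j * v j) = 0 \<and>
      Re (\<Sum>i\<in>I. \<Sum>j\<in>I. cnj (v i) * A i j * v j) \<ge> 0)"

definition density :: "'i set \<Rightarrow> ('i \<Rightarrow> 'i \<Rightarrow> complex) \<Rightarrow> bool" where
  "density I \<rho> \<longleftrightarrow> psd I \<rho> \<and> trace I \<rho> = 1"

text \<open>Basis of (C^Z \<otimes> H^Q)^{\<otimes>M}: functions from the register positions {..<M}
to pairs (classical label, basis index of H^Q).\<close>
abbreviation basisM :: "nat \<Rightarrow> (nat \<Rightarrow> 'z \<times> 'q) set" where
  "basisM M \<equiv> PiE {..<M} (\<lambda>_. UNIV)"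

definition tensor_pow :: "nat \<Rightarrow> ('a \<Rightarrow> 'a \<Rightarrow> complex) \<Rightarrow> ((nat \<Rightarrow> 'a) \<Rightarrow> (nat \<Rightarrow> 'a) \<Rightarrow> complex)" where
  "tensor_pow M A = (\<lambda>f g. \<Prod>i<M. A (f i) (g i))"

text \<open>Classical-quantum state \<Sum>_z p_z |z><z| \<otimes> \<sigma>_z on C^Z \<otimes> H^Q.\<close>
definition cq_state :: "('z \<Rightarrow> real) \<Rightarrow> ('z \<Rightarrow> 'q \<Rightarrow> 'q \<Rightarrow> complex) \<Rightarrow> ('z \<times> 'q) \<Rightarrow> ('z \<times> 'q) \<Rightarrow> complex" where
  "cq_state p \<sigma> = (\<lambda>(z, a) (z', b). if z = z' then complex_of_real (p z) * \<sigma> z a b else 0)"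

definition avg_state :: "('z::finite \<Rightarrow> real) \<Rightarrow> ('z \<Rightarrow> 'q \<Rightarrow> 'q \<Rightarrow> complex) \<Rightarrow> 'q \<Rightarrow> 'q \<Rightarrow> complex" where
  "avg_state p \<rho> = (\<lambda>a b. \<Sum>z\<in>UNIV. complex_of_real (p z) * \<rho> z a b)"

text \<open>The operator \<pi>_\<tau>^{\<otimes>M} \<otimes> I_Q : |f> \<mapsto> |\<tau>\<cdot>f>, where \<tau> acts on every classical register.\<close>
definition relabel :: "nat \<Rightarrow> ('z \<Rightarrow> 'z) \<Rightarrow> (nat \<Rightarrow> 'z \<times> 'q) \<Rightarrow> (nat \<Rightarrow> 'z \<times> 'q)" where
  "relabel M \<tau> f = restrict (\<lambda>i. (\<tau> (fst (f i)), snd (f i))) {..<M}"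

definition perm_op :: "nat \<Rightarrow> ('z \<Rightarrow> 'z) \<Rightarrow> (nat \<Rightarrow> 'z \<times> 'q) \<Rightarrow> (nat \<Rightarrow> 'z \<times> 'q) \<Rightarrow> complex" where
  "perm_op M \<tau> = (\<lambda>f g. if f = relabel M \<tau> g then 1 else 0)"

end

theory Submission
  imports Defs
begin

(* By multilinearity of the tensor power, rho_{1,M} and rho_{2,M} are mixtures of the product states
   sigma(zeta, eta) = (x)_i |zeta_i><zeta_i| (x) rho_{eta_i}, indexed by label sequences zeta, eta, with
   weights p_zeta [zeta = eta] and p_zeta p_eta respectively (p_zeta = prod_i p_{zeta_i}).  With
   T(zeta, eta) = Tr[E_1 sigma(zeta, eta)], which lies in [0,1], the success probability equals
   1/2 + 1/2 (sum_zeta p_zeta T(zeta, zeta) - sum_{zeta,eta} p_zeta p_eta T(zeta, eta)).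
   If zeta and eta both have pairwise distinct entries, some permutation of the labels maps zeta to
   eta, so permutation invariance of E_1 gives T(zeta, eta) = T(eta, eta).  Hence only label sequences
   with a repeated entry can contribute, and by the union bound over pairs of positions their
   probability is at most M^2 sum_z p_z^2. *)

definition qform :: "'i set \<Rightarrow> ('i \<Rightarrow> 'i \<Rightarrow> complex) \<Rightarrow> ('i \<Rightarrow> complex) \<Rightarrow> complex" where
  "qform I A v = (\<Sum>i\<in>I. \<Sum>j\<in>I. cnj (v i) * A i j * v j)"

lemma psd_iff_qform: "psd I A \<longleftrightarrow> (\<forall>v. Im (qform I A v) = 0 \<and> Re (qform I A v) \<ge> 0)"
  unfolding psd_def qform_def by simp

lemma qform_restrict:
  assumes "finite I" "J \<subseteq> I"
  shows "qform I A (\<lambda>x. if x \<in> J then v x else 0) = qform J A v"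
proof -
  have "qform I A (\<lambda>x. if x \<in> J then v x else 0) =
     (\<Sum>i\<in>I. if i \<in> J then (\<Sum>j\<in>I. if j \<in> J then cnj (v i) * A i j * v j else 0) else 0)"
    unfolding qform_def by (intro sum.cong refl) (auto intro!: sum.cong)
  also have "\<dots> = qform J A v"
    unfolding qform_def using assms
    by (simp add: sum.If_cases Int_absorb1 Int_absorb2 flip: Int_def)
  finally show ?thesis .
qed

lemma psd_subset: "finite I \<Longrightarrow> J \<subseteq> I \<Longrightarrow> psd I A \<Longrightarrow> psd J A"
  unfolding psd_iff_qform by (metis qform_restrict)

lemma qform_single:
  assumes "finite I" "i \<in> I"
  shows "qform I A (\<lambda>x. if x = i then a else 0) = cnj a * A i i * a"
  using qform_restrict[OF assms(1), of "{i}" A "\<lambda>_. a"] assms by (simp add: qform_def)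

lemma qform_pair:
  assumes "finite I" "i \<in> I" "j \<in> I" "i \<noteq> j"
  shows "qform I A (\<lambda>x. if x = i then a else if x = j then b else 0) =
    cnj a * A i i * a + cnj a * A i j * b + cnj b * A j i * a + cnj b * A j j * b"
proof -
  have "(\<lambda>x. if x = i then a else if x = j then b else 0) =
        (\<lambda>x. if x \<in> {i, j} then (if x = i then a else b) else 0)"
    by auto
  then show ?thesis
    using qform_restrict[OF assms(1), of "{i, j}" A "\<lambda>x. if x = i then a else b"] assms
    by (simp add: qform_def algebra_simps)
qed

lemma
  assumes "finite I" "psd I A" "i \<in> I"
  shows psd_diag_real: "A i i = of_real (Re (A i i))"
    and psd_diag_nonneg: "Re (A i i) \<ge> 0"
  using assms(2) qform_single[OF assms(1,3), of A 1]
  unfolding psd_iff_qform by (auto simp: complex_eq_iff dest: spec[of _ "\<lambda>x. if x = i then 1 else 0"])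

lemma psd_hermitian:
  assumes "finite I" "psd I A" "i \<in> I" "j \<in> I"
  shows "A j i = cnj (A i j)"
proof (cases "i = j")
  case True
  then show ?thesis using psd_diag_real[OF assms(1-3)] by (simp add: complex_eq_iff)
next
  case False
  have diag: "Im (A i i) = 0" "Im (A j j) = 0"
    using psd_diag_real[OF assms(1,2)] assms(3,4) by (metis Im_complex_of_real)+
  have "Im (qform I A (\<lambda>x. if x = i then 1 else if x = j then c else 0)) = 0" for c
    using assms(2) unfolding psd_iff_qform by blast
  from this[of 1] this[of \<i>] show ?thesis
    using diag unfolding qform_pair[OF assms(1,3,4) False] by (simp add: complex_eq_iff)
qed

lemma qform_shift:
  assumes "finite I" "i \<in> I"
  shows "qform I A (\<lambda>x. v x + (if x = i then b else 0)) =
    qform I A v + b * (\<Sum>x\<in>I. cnj (v x) * A x i) + cnj b * (\<Sum>y\<in>I. A i y * v y) + cnj b * b * A i i"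
proof -
  have expand: "cnj (v x + (if x = i then b else 0)) * A x y * (v y + (if y = i then b else 0)) =
     cnj (v x) * A x y * v y + (if y = i then b * (cnj (v x) * A x i) else 0)
     + (if x = i then cnj b * (A i y * v y) else 0)
     + (if x = i then (if y = i then cnj b * b * A i i else 0) else 0)" for x y
    by (cases "x = i"; cases "y = i") (simp_all add: algebra_simps)
  have sum_if: "(\<Sum>y\<in>I. if P then f y else 0) = (if P then sum f I else 0)" for P and f :: "'a \<Rightarrow> complex"
    by simp
  show ?thesis
    unfolding qform_def expand sum.distrib using assms by (simp add: sum_distrib_left sum_if)
qed

lemma qform_minus_outer:
  "qform I (\<lambda>x y. A x y - w x * cnj (w y)) v =
   qform I A v - (\<Sum>x\<in>I. cnj (v x) * w x) * (\<Sum>y\<in>I. cnj (w y) * v y)"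
  unfolding qform_def sum_product sum_subtractf[symmetric] right_diff_distrib left_diff_distrib
  by (intro sum.cong refl) (simp add: mult.assoc mult.left_commute)

lemma psd_zero_row:
  assumes "finite I" "psd I A" "i \<in> I" "j \<in> I" "A i i = 0"
  shows "A i j = 0"
proof (rule ccontr)
  assume nz: "A i j \<noteq> 0"
  then have ij: "i \<noteq> j" using assms by auto
  define a where "a = A i j"
  define n where "n = (Re a)^2 + (Im a)^2"
  have "n > 0" using nz unfolding n_def a_def
    by (simp add: complex_eq_iff sum_power2_gt_zero_iff)
  define s where "s = (Re (A j j) + 1) / (2 * n)"
  define t where "t = - of_real s * a"
  \<comment> \<open>the test vector t e_i + e_j has quadratic form Re (A j j) - 2 s n = -1\<close>
  have "Re (qform I A (\<lambda>x. if x = i then t else if x = j then 1 else 0)) \<ge> 0"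
    using assms(2) unfolding psd_iff_qform by blast
  then have "0 \<le> Re (A j j) - 2 * s * n"
    using psd_hermitian[OF assms(1-4)] assms(5)
    unfolding qform_pair[OF assms(1,3,4) ij] t_def n_def a_def
    by (simp add: algebra_simps power2_eq_square)
  moreover have "2 * s * n = Re (A j j) + 1" unfolding s_def using \<open>n > 0\<close> by simp
  ultimately show False by simp
qed

lemma psd_schur_complement:
  assumes "finite I" "psd I A" "i \<in> I" "Re (A i i) > 0"
  defines "w \<equiv> (\<lambda>x. A x i / of_real (sqrt (Re (A i i))))"
  shows "psd I (\<lambda>x y. A x y - w x * cnj (w y))"
  unfolding psd_iff_qform
proof
  fix v
  define d where "d = Re (A i i)"
  have "d > 0" using assms(4) d_def by simp
  have Aii: "A i i = of_real d" using psd_diag_real[OF assms(1-3)] unfolding d_def .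
  define s where "s = (\<Sum>y\<in>I. A i y * v y)"
  have c1: "(\<Sum>x\<in>I. cnj (v x) * A x i) = cnj s"
    unfolding s_def using psd_hermitian[OF assms(1,2,3)] by (simp add: mult.commute)
  have c2: "(\<Sum>x\<in>I. cnj (v x) * w x) = cnj s / of_real (sqrt d)"
    unfolding w_def d_def[symmetric] c1[symmetric] by (simp add: sum_divide_distrib)
  have c3: "(\<Sum>y\<in>I. cnj (w y) * v y) = s / of_real (sqrt d)"
    unfolding w_def d_def[symmetric] s_def using psd_hermitian[OF assms(1,2) _ assms(3)]
    by (simp add: sum_divide_distrib)
  have sq: "of_real (sqrt d) * of_real (sqrt d) = (of_real d :: complex)"
    using \<open>d > 0\<close> by (simp flip: of_real_mult)
  \<comment> \<open>completing the square: the Schur complement's form at v is A's form at v - (s / d) e_i\<close>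
  have "qform I (\<lambda>x y. A x y - w x * cnj (w y)) v =
        qform I A (\<lambda>x. v x + (if x = i then - s / of_real d else 0))"
    unfolding qform_minus_outer qform_shift[OF assms(1,3)] c1 c2 c3 s_def[symmetric] Aii
    using \<open>d > 0\<close> sq by (simp add: field_simps)
  then show "Im (qform I (\<lambda>x y. A x y - w x * cnj (w y)) v) = 0 \<and>
      0 \<le> Re (qform I (\<lambda>x y. A x y - w x * cnj (w y)) v)"
    using assms(2) unfolding psd_iff_qform by simp
qed

lemma psd_gram_decomposition:
  assumes "finite I" "psd I A"
  shows "\<exists>W. \<forall>a\<in>I. \<forall>b\<in>I. A a b = (\<Sum>k\<in>I. W k a * cnj (W k b))"
  using assms
proof (induction I arbitrary: A rule: finite_induct)
  case empty
  then show ?case by simp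
next
  case (insert i J A)
  let ?I = "insert i J"
  have fI: "finite ?I" using insert by simp
  have iI: "i \<in> ?I" by simp
  define w where "w = (\<lambda>x. if Re (A i i) > 0 then A x i / of_real (sqrt (Re (A i i))) else 0)"
  define B where "B = (\<lambda>x y. A x y - w x * cnj (w y))"
  have B_psd: "psd ?I B"
    using psd_schur_complement[OF fI insert.prems iI] insert.prems unfolding B_def w_def
    by (cases "Re (A i i) > 0") simp_all
  have B_row: "B i y = 0" if "y \<in> ?I" for y
  proof (cases "Re (A i i) > 0")
    case True
    have sq: "of_real (sqrt (Re (A i i))) * of_real (sqrt (Re (A i i))) =
        (of_real (Re (A i i)) :: complex)"
      using True by (simp flip: of_real_mult)
    have "w i * cnj (w y) =
        A i i * A i y / (of_real (sqrt (Re (A i i))) * of_real (sqrt (Re (A i i))))"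
      unfolding w_def using True psd_hermitian[OF fI insert.prems that iI] by simp
    also have "\<dots> = A i y"
      unfolding sq using True by (subst psd_diag_real[OF fI insert.prems iI]) simp
    finally show ?thesis unfolding B_def by simp
  next
    case False
    then have "A i i = 0"
      using psd_diag_real[OF fI insert.prems iI] psd_diag_nonneg[OF fI insert.prems iI]
      by (simp add: complex_eq_iff)
    then show ?thesis
      unfolding B_def w_def using False psd_zero_row[OF fI insert.prems iI that] by simp
  qed
  have B_col: "B x i = 0" if "x \<in> ?I" for x
    using psd_hermitian[OF fI B_psd iI that] B_row[OF that] by simp
  obtain W where W: "\<forall>a\<in>J. \<forall>b\<in>J. B a b = (\<Sum>k\<in>J. W k a * cnj (W k b))"
    using insert.IH psd_subset[OF fI _ B_psd] by blast
  \<comment> \<open>w becomes the new row of the factor; B vanishes on row and column i, so W covers the rest\<close>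
  define W' where "W' = (\<lambda>k a. if k = i then w a else if a \<in> J then W k a else 0)"
  show ?case
  proof (intro exI ballI)
    fix a b assume a: "a \<in> ?I" and b: "b \<in> ?I"
    have "(\<Sum>k\<in>J. W' k a * cnj (W' k b)) = B a b"
    proof (cases "a \<in> J \<and> b \<in> J")
      case True
      then show ?thesis using W insert.hyps by (auto simp: W'_def intro!: sum.cong)
    next
      case False
      then have "a = i \<or> b = i" using a b by auto
      then show ?thesis
        using B_row B_col a b False insert.hyps by (auto simp: W'_def intro!: sum.neutral)
    qed
    then show "A a b = (\<Sum>k\<in>?I. W' k a * cnj (W' k b))"
      using insert.hyps unfolding B_def by (simp add: W'_def)
  qed
qed

lemma qform_gram:
  "qform I (\<lambda>a b. \<Sum>k\<in>K. W k a * cnj (W k b)) v =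
   (\<Sum>k\<in>K. (\<Sum>a\<in>I. cnj (v a) * W k a) * cnj (\<Sum>a\<in>I. cnj (v a) * W k a))"
  unfolding qform_def sum_product sum_distrib_left sum_distrib_right cnj_sum
  by (subst sum.swap, subst (2) sum.swap, simp add: sum.swap[of _ K] ac_simps)

lemma psd_gram: "psd I (\<lambda>a b. \<Sum>k\<in>K. W k a * cnj (W k b))"
  unfolding psd_iff_qform qform_gram complex_norm_square[symmetric]
  by (simp add: Im_sum Re_sum sum_nonneg)

lemma trace_mmult_gram:
  "trace I (mmult I E (\<lambda>a b. \<Sum>k\<in>K. W k a * cnj (W k b))) = (\<Sum>k\<in>K. qform I E (W k))"
  unfolding trace_def mmult_def qform_def sum_distrib_left
  by (subst sum.swap, subst (2) sum.swap, simp add: sum.swap[of _ K] ac_simps)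

lemma trace_mmult_psd_nonneg:
  assumes "finite I" "psd I E" "psd I A"
  shows "Re (trace I (mmult I E A)) \<ge> 0"
proof -
  obtain W where W: "\<forall>a\<in>I. \<forall>b\<in>I. A a b = (\<Sum>k\<in>I. W k a * cnj (W k b))"
    using psd_gram_decomposition[OF assms(1,3)] by blast
  have "trace I (mmult I E A) = trace I (mmult I E (\<lambda>a b. \<Sum>k\<in>I. W k a * cnj (W k b)))"
    unfolding trace_def mmult_def using W by simp
  then show ?thesis
    using assms(2) unfolding trace_mmult_gram psd_iff_qform by (simp add: Re_sum sum_nonneg)
qed

lemma trace_mmult_diff:
  "trace I (mmult I (\<lambda>f g. A f g - B f g) C) = trace I (mmult I A C) - trace I (mmult I B C)"
  unfolding trace_def mmult_def by (simp add: left_diff_distrib sum_subtractf)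

lemma trace_mmult_idop: "finite I \<Longrightarrow> trace I (mmult I idop A) = trace I A"
  unfolding trace_def mmult_def idop_def by (simp add: if_distrib[of "\<lambda>x. x * _"] cong: if_cong)

lemma trace_mmult_effect_le_1:
  assumes "finite I" "psd I (\<lambda>f g. idop f g - E f g)" "psd I A" "trace I A = 1"
  shows "Re (trace I (mmult I E A)) \<le> 1"
  using trace_mmult_psd_nonneg[OF assms(1-3)] assms(1,4)
  unfolding trace_mmult_diff trace_mmult_idop[OF assms(1)] by simp

lemma trace_mmult_sum:
  "trace I (mmult I E (\<lambda>f g. \<Sum>x\<in>X. A x f g)) = (\<Sum>x\<in>X. trace I (mmult I E (A x)))"
  unfolding trace_def mmult_def sum_distrib_left
  by (subst sum.swap, subst (2) sum.swap, rule refl)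

lemma trace_mmult_scale:
  "trace I (mmult I E (\<lambda>f g. c * A f g)) = c * trace I (mmult I E A)"
  unfolding trace_def mmult_def sum_distrib_left by (simp add: ac_simps)

lemma trace_mmult_reindex:
  assumes "bij_betw h I I" "\<And>f g. f \<in> I \<Longrightarrow> g \<in> I \<Longrightarrow> E (h f) (h g) = E f g"
  shows "trace I (mmult I E (\<lambda>f g. A (h f) (h g))) = trace I (mmult I E A)"
proof -
  have reindex: "(\<Sum>x\<in>I. F (h x)) = (\<Sum>x\<in>I. F x)" for F :: "_ \<Rightarrow> complex"
    using sum.reindex_bij_betw[OF assms(1)] .
  have "trace I (mmult I E (\<lambda>f g. A (h f) (h g))) = (\<Sum>f\<in>I. \<Sum>g\<in>I. E (h f) (h g) * A (h g) (h f))"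
    unfolding trace_def mmult_def by (simp add: assms(2))
  also have "\<dots> = (\<Sum>f\<in>I. \<Sum>g\<in>I. E (h f) g * A g (h f))"
    by (rule sum.cong[OF refl], rule reindex[of "\<lambda>g. E (h _) g * A g (h _)"])
  also have "\<dots> = trace I (mmult I E A)"
    unfolding trace_def mmult_def by (rule reindex)
  finally show ?thesis .
qed

definition tensor_prod ::
  "nat \<Rightarrow> (nat \<Rightarrow> 'a \<Rightarrow> 'a \<Rightarrow> complex) \<Rightarrow> (nat \<Rightarrow> 'a) \<Rightarrow> (nat \<Rightarrow> 'a) \<Rightarrow> complex" where
  "tensor_prod M A = (\<lambda>f g. \<Prod>i<M. A i (f i) (g i))"

lemma tensor_pow_eq_tensor_prod: "tensor_pow M A = tensor_prod M (\<lambda>_. A)"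
  unfolding tensor_pow_def tensor_prod_def ..

lemma tensor_prod_sum:
  assumes "finite Z"
  shows "tensor_prod M (\<lambda>i x y. \<Sum>z\<in>Z. c i z * A i z x y) =
    (\<lambda>f g. \<Sum>\<zeta>\<in>PiE {..<M} (\<lambda>_. Z). (\<Prod>i<M. c i (\<zeta> i)) * tensor_prod M (\<lambda>i. A i (\<zeta> i)) f g)"
  unfolding tensor_prod_def using assms by (simp add: prod_sum_PiE prod.distrib)

lemma trace_tensor_prod:
  "trace (PiE {..<M} (\<lambda>_. UNIV)) (tensor_prod M A) = (\<Prod>i<M. trace (UNIV :: 'a::finite set) (A i))"
  unfolding trace_def tensor_prod_def by (simp add: prod_sum_PiE)

lemma psd_tensor_prod:
  fixes A :: "nat \<Rightarrow> 'a::finite \<Rightarrow> 'a \<Rightarrow> complex"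
  assumes "\<And>i. i < M \<Longrightarrow> psd UNIV (A i)"
  shows "psd (PiE {..<M} (\<lambda>_. UNIV)) (tensor_prod M A)"
proof -
  have "\<forall>i\<in>{..<M}. \<exists>Wi :: 'a \<Rightarrow> 'a \<Rightarrow> complex. \<forall>a b. A i a b = (\<Sum>k\<in>UNIV. Wi k a * cnj (Wi k b))"
    using psd_gram_decomposition[OF finite_UNIV assms] by simp
  from bchoice[OF this] obtain W :: "nat \<Rightarrow> 'a \<Rightarrow> 'a \<Rightarrow> complex"
    where W: "\<forall>i\<in>{..<M}. \<forall>a b. A i a b = (\<Sum>k\<in>UNIV. W i k a * cnj (W i k b))"
    by blast
  have "tensor_prod M A = tensor_prod M (\<lambda>i a b. \<Sum>k\<in>UNIV. W i k a * cnj (W i k b))"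
    unfolding tensor_prod_def using W by simp
  also have "\<dots> = (\<lambda>f g. \<Sum>\<kappa>\<in>PiE {..<M} (\<lambda>_. UNIV).
      (\<Prod>i<M. W i (\<kappa> i) (f i)) * cnj (\<Prod>i<M. W i (\<kappa> i) (g i)))"
    unfolding tensor_prod_def by (intro ext) (subst prod_sum_PiE, auto simp: prod.distrib)
  finally show ?thesis by (simp only: psd_gram)
qed

definition labelled :: "'z \<Rightarrow> ('q \<Rightarrow> 'q \<Rightarrow> complex) \<Rightarrow> 'z \<times> 'q \<Rightarrow> 'z \<times> 'q \<Rightarrow> complex" where
  "labelled z \<sigma> = (\<lambda>(z1, a) (z2, b). if z1 = z \<and> z2 = z then \<sigma> a b else 0)"

lemma cq_state_eq_sum_labelled:
  fixes \<sigma> :: "'z::finite \<Rightarrow> 'q \<Rightarrow> 'q \<Rightarrow> complex"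
  shows "cq_state p \<sigma> = (\<lambda>x y. \<Sum>z\<in>(UNIV :: 'z::finite set). of_real (p z) * labelled z (\<sigma> z) x y)"
proof (intro ext, clarify)
  fix z1 z2 :: 'z and a b :: 'q
  have "of_real (p z) * labelled z (\<sigma> z) (z1, a) (z2, b) =
        (if z = z1 then (if z1 = z2 then of_real (p z1) * \<sigma> z1 a b else 0) else 0)" for z
    by (auto simp: labelled_def)
  then show "cq_state p \<sigma> (z1, a) (z2, b) = (\<Sum>z\<in>UNIV. of_real (p z) * labelled z (\<sigma> z) (z1, a) (z2, b))"
    by (simp add: cq_state_def)
qed

lemma labelled_sum:
  "labelled z (\<lambda>a b. \<Sum>y\<in>Y. c y * \<sigma> y a b) = (\<lambda>x x'. \<Sum>y\<in>Y. c y * labelled z (\<sigma> y) x x')"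
  unfolding labelled_def by (auto simp: fun_eq_iff)

lemma trace_labelled:
  "trace (UNIV :: ('z::finite \<times> 'q::finite) set) (labelled z \<sigma>) = trace UNIV \<sigma>"
proof -
  have "trace UNIV (labelled z \<sigma>) = (\<Sum>z1\<in>UNIV. \<Sum>a\<in>UNIV. if z1 = z then \<sigma> a a else 0)"
    unfolding trace_def UNIV_Times_UNIV[symmetric] sum.cartesian_product'
    by (simp add: labelled_def)
  then show ?thesis unfolding trace_def by (simp add: sum.swap[of _ UNIV UNIV])
qed

lemma psd_labelled:
  fixes \<sigma> :: "'q::finite \<Rightarrow> 'q \<Rightarrow> complex"
  assumes "psd UNIV \<sigma>"
  shows "psd UNIV (labelled z \<sigma>)"
proof -
  obtain W :: "'q \<Rightarrow> 'q \<Rightarrow> complex"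
    where W: "\<forall>a\<in>UNIV. \<forall>b\<in>UNIV. \<sigma> a b = (\<Sum>k\<in>UNIV. W k a * cnj (W k b))"
    using psd_gram_decomposition[OF finite_UNIV assms] by blast
  have "labelled z \<sigma> = (\<lambda>x y. \<Sum>k\<in>UNIV.
      (if fst x = z then W k (snd x) else 0) * cnj (if fst y = z then W k (snd y) else 0))"
    using W by (auto simp: labelled_def fun_eq_iff)
  then show ?thesis by (simp only: psd_gram)
qed

lemma tensor_pow_cq_state:
  "tensor_pow M (cq_state p \<sigma>) = (\<lambda>f g. \<Sum>\<zeta>\<in>PiE {..<M} (\<lambda>_. UNIV :: 'z::finite set).
     of_real (\<Prod>i<M. p (\<zeta> i)) * tensor_prod M (\<lambda>i. labelled (\<zeta> i) (\<sigma> (\<zeta> i))) f g)"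
  unfolding tensor_pow_eq_tensor_prod cq_state_eq_sum_labelled
  using tensor_prod_sum[of "UNIV :: 'z set" M "\<lambda>_ z. of_real (p z)" "\<lambda>_ z. labelled z (\<sigma> z)"]
  by simp

lemma tensor_pow_cq_state_avg:
  "tensor_pow M (cq_state p (\<lambda>_. avg_state p \<rho>)) = (\<lambda>f g.
     \<Sum>\<zeta>\<in>PiE {..<M} (\<lambda>_. UNIV :: 'z::finite set). \<Sum>\<eta>\<in>PiE {..<M} (\<lambda>_. UNIV).
       of_real ((\<Prod>i<M. p (\<zeta> i)) * (\<Prod>i<M. p (\<eta> i))) * tensor_prod M (\<lambda>i. labelled (\<zeta> i) (\<rho> (\<eta> i))) f g)"
proof -
  have "tensor_prod M (\<lambda>i. labelled (\<zeta> i) (avg_state p \<rho>)) = (\<lambda>f g.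
     \<Sum>\<eta>\<in>PiE {..<M} (\<lambda>_. UNIV).
       of_real (\<Prod>i<M. p (\<eta> i)) * tensor_prod M (\<lambda>i. labelled (\<zeta> i) (\<rho> (\<eta> i))) f g)"
    for \<zeta> :: "nat \<Rightarrow> 'z"
    unfolding avg_state_def labelled_sum
    using tensor_prod_sum[of "UNIV :: 'z set" M "\<lambda>_ y. of_real (p y)" "\<lambda>i y. labelled (\<zeta> i) (\<rho> y)"]
    by simp
  then show ?thesis
    unfolding tensor_pow_cq_state by (simp add: sum_distrib_left mult.assoc)
qed

lemma relabel_in_basisM: "relabel M \<tau> f \<in> basisM M"
  by (simp add: relabel_def)

lemma relabel_inv_relabel:
  assumes "bij \<tau>" "f \<in> basisM M"
  shows "relabel M (inv \<tau>) (relabel M \<tau> f) = f"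
proof
  fix i
  show "relabel M (inv \<tau>) (relabel M \<tau> f) i = f i"
    using assms PiE_arb[OF assms(2)] by (simp add: relabel_def bij_is_inj)
qed

lemma bij_betw_relabel:
  assumes "bij \<tau>"
  shows "bij_betw (relabel M \<tau>) (basisM M) (basisM M)"
proof (rule bij_betw_byWitness[where f' = "relabel M (inv \<tau>)"])
  show "\<forall>f\<in>basisM M. relabel M (inv \<tau>) (relabel M \<tau> f) = f"
    using relabel_inv_relabel[OF assms] by blast
  show "\<forall>f\<in>basisM M. relabel M \<tau> (relabel M (inv \<tau>) f) = f"
    using relabel_inv_relabel[OF bij_imp_bij_inv[OF assms], of _ M] unfolding inv_inv_eq[OF assms] by blast
qed (simp_all add: image_subset_iff relabel_in_basisM)

lemma perm_op_conj:
  fixes E :: "(nat \<Rightarrow> 'z::finite \<times> 'q::finite) \<Rightarrow> (nat \<Rightarrow> 'z \<times> 'q) \<Rightarrow> complex"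
  assumes "bij \<tau>" "f \<in> basisM M" "g \<in> basisM M"
  shows "mmult (basisM M) (mmult (basisM M) (perm_op M \<tau>) E) (adjoint (perm_op M \<tau>)) f g =
    E (relabel M (inv \<tau>) f) (relabel M (inv \<tau>) g)"
proof -
  have preimage: "h = relabel M \<tau> j \<and> j \<in> basisM M \<longleftrightarrow> j = relabel M (inv \<tau>) h"
    if "h \<in> basisM M" for h j :: "nat \<Rightarrow> 'z \<times> 'q"
  proof
    assume "h = relabel M \<tau> j \<and> j \<in> basisM M"
    then show "j = relabel M (inv \<tau>) h" by (simp add: relabel_inv_relabel[OF assms(1)])
  next
    assume "j = relabel M (inv \<tau>) h"
    then show "h = relabel M \<tau> j \<and> j \<in> basisM M"
      using relabel_inv_relabel[OF bij_imp_bij_inv[OF assms(1)] that]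
      by (simp add: inv_inv_eq[OF assms(1)] relabel_in_basisM)
  qed
  have row: "(\<Sum>j\<in>basisM M. perm_op M \<tau> h j * F j) = F (relabel M (inv \<tau>) h)"
    if "h \<in> basisM M" for h :: "nat \<Rightarrow> 'z \<times> 'q" and F
  proof -
    have "(\<Sum>j\<in>basisM M. perm_op M \<tau> h j * F j) =
        (\<Sum>j\<in>basisM M. if j = relabel M (inv \<tau>) h then F j else 0)"
      unfolding perm_op_def using preimage[OF that] by (intro sum.cong refl) auto
    then show ?thesis by (simp add: sum.delta finite_PiE relabel_in_basisM)
  qed
  have cnj_perm_op: "cnj (perm_op M \<tau> h j) = perm_op M \<tau> h j" for h j :: "nat \<Rightarrow> 'z \<times> 'q"
    by (simp add: perm_op_def)
  have "(\<Sum>k\<in>basisM M. F k * cnj (perm_op M \<tau> g k)) = F (relabel M (inv \<tau>) g)" for F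
    using row[OF assms(3), of F] by (simp add: cnj_perm_op mult.commute)
  then show ?thesis
    unfolding mmult_def adjoint_def row[OF assms(2)] .
qed

lemma relabel_invariant_if_perm_op_invariant:
  fixes E :: "(nat \<Rightarrow> 'z::finite \<times> 'q::finite) \<Rightarrow> (nat \<Rightarrow> 'z \<times> 'q) \<Rightarrow> complex"
  assumes "\<And>\<tau>. bij \<tau> \<Longrightarrow> \<forall>f\<in>basisM M. \<forall>g\<in>basisM M.
      mmult (basisM M) (mmult (basisM M) (perm_op M \<tau>) E) (adjoint (perm_op M \<tau>)) f g = E f g"
    and "bij \<tau>" "f \<in> basisM M" "g \<in> basisM M"
  shows "E (relabel M \<tau> f) (relabel M \<tau> g) = E f g"
proof -
  have "mmult (basisM M) (mmult (basisM M) (perm_op M (inv \<tau>)) E) (adjoint (perm_op M (inv \<tau>))) f g =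
      E (relabel M \<tau> f) (relabel M \<tau> g)"
    using perm_op_conj[OF bij_imp_bij_inv[OF assms(2)] assms(3,4), of E]
    by (simp add: inv_inv_eq[OF assms(2)])
  then show ?thesis using assms(1)[OF bij_imp_bij_inv[OF assms(2)]] assms(3,4) by simp
qed

lemma tensor_prod_labelled_relabel:
  assumes "inj \<tau>"
  shows "tensor_prod M (\<lambda>i. labelled (\<tau> (\<zeta> i)) (A i)) (relabel M \<tau> f) (relabel M \<tau> g) =
    tensor_prod M (\<lambda>i. labelled (\<zeta> i) (A i)) f g"
  unfolding tensor_prod_def relabel_def labelled_def
  by (intro prod.cong refl) (simp add: case_prod_beta inj_eq[OF assms])

lemma bij_extending_inj_on:
  fixes \<zeta> \<zeta>' :: "nat \<Rightarrow> 'z::finite"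
  assumes "inj_on \<zeta> {..<M}" "inj_on \<zeta>' {..<M}"
  obtains \<tau> where "bij \<tau>" "\<And>i. i < M \<Longrightarrow> \<tau> (\<zeta> i) = \<zeta>' i"
proof -
  let ?A = "\<zeta> ` {..<M}" and ?A' = "\<zeta>' ` {..<M}"
  have on_image: "bij_betw (\<zeta>' \<circ> the_inv_into {..<M} \<zeta>) ?A ?A'"
    using bij_betw_trans[OF bij_betw_the_inv_into[OF inj_on_imp_bij_betw[OF assms(1)]]
        inj_on_imp_bij_betw[OF assms(2)]] .
  have "card (UNIV - ?A) = card (UNIV - ?A')"
    using card_image[OF assms(1)] card_image[OF assms(2)] by (simp add: card_Diff_subset)
  then obtain h where off_image: "bij_betw h (UNIV - ?A) (UNIV - ?A')"
    using finite_same_card_bij[OF finite finite] by blast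
  define \<tau> where "\<tau> x = (if x \<in> ?A then \<zeta>' (the_inv_into {..<M} \<zeta> x) else h x)" for x
  have "bij_betw \<tau> (?A \<union> (UNIV - ?A)) (?A' \<union> (UNIV - ?A'))"
  proof (rule bij_betw_combine)
    show "bij_betw \<tau> ?A ?A'"
      using on_image by (rule bij_betw_cong[THEN iffD1, rotated]) (simp add: \<tau>_def)
    show "bij_betw \<tau> (UNIV - ?A) (UNIV - ?A')"
      using off_image by (rule bij_betw_cong[THEN iffD1, rotated]) (simp add: \<tau>_def)
  qed auto
  moreover have "\<tau> (\<zeta> i) = \<zeta>' i" if "i < M" for i
    using that the_inv_into_f_f[OF assms(1)] by (simp add: \<tau>_def)
  ultimately show ?thesis using that by simp
qed

lemma trace_mmult_labelled_inj_on:
  fixes E :: "(nat \<Rightarrow> 'z::finite \<times> 'q::finite) \<Rightarrow> (nat \<Rightarrow> 'z \<times> 'q) \<Rightarrow> complex"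
  assumes invariant: "\<And>\<tau> f g. bij \<tau> \<Longrightarrow> f \<in> basisM M \<Longrightarrow> g \<in> basisM M \<Longrightarrow>
      E (relabel M \<tau> f) (relabel M \<tau> g) = E f g"
    and "inj_on \<zeta> {..<M}" "inj_on \<zeta>' {..<M}"
  shows "trace (basisM M) (mmult (basisM M) E (tensor_prod M (\<lambda>i. labelled (\<zeta> i) (A i)))) =
    trace (basisM M) (mmult (basisM M) E (tensor_prod M (\<lambda>i. labelled (\<zeta>' i) (A i))))"
proof -
  obtain \<tau> where \<tau>: "bij \<tau>" "\<And>i. i < M \<Longrightarrow> \<tau> (\<zeta> i) = \<zeta>' i"
    using bij_extending_inj_on[OF assms(2,3)] by blast
  have relabelled: "tensor_prod M (\<lambda>i. labelled (\<zeta> i) (A i)) =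
      (\<lambda>f g. tensor_prod M (\<lambda>i. labelled (\<tau> (\<zeta> i)) (A i)) (relabel M \<tau> f) (relabel M \<tau> g))"
    by (simp add: tensor_prod_labelled_relabel[OF bij_is_inj[OF \<tau>(1)]])
  have "trace (basisM M) (mmult (basisM M) E (tensor_prod M (\<lambda>i. labelled (\<zeta> i) (A i)))) =
      trace (basisM M) (mmult (basisM M) E (tensor_prod M (\<lambda>i. labelled (\<tau> (\<zeta> i)) (A i))))"
    unfolding relabelled
    by (rule trace_mmult_reindex[where E = E, OF bij_betw_relabel[OF \<tau>(1)] invariant[OF \<tau>(1)]])
  also have "tensor_prod M (\<lambda>i. labelled (\<tau> (\<zeta> i)) (A i)) = tensor_prod M (\<lambda>i. labelled (\<zeta>' i) (A i))"
    unfolding tensor_prod_def by (intro ext prod.cong refl) (simp add: \<tau>(2))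
  finally show ?thesis .
qed

lemma
  fixes \<rho> :: "'z::finite \<Rightarrow> 'q::finite \<Rightarrow> 'q \<Rightarrow> complex" and \<zeta> \<eta> :: "nat \<Rightarrow> 'z"
  assumes "\<And>z. density UNIV (\<rho> z)"
  shows psd_labelled_prod: "psd (basisM M) (tensor_prod M (\<lambda>i. labelled (\<zeta> i) (\<rho> (\<eta> i))))"
    and trace_labelled_prod: "trace (basisM M) (tensor_prod M (\<lambda>i. labelled (\<zeta> i) (\<rho> (\<eta> i)))) = 1"
  using assms unfolding density_def
  by (auto intro!: psd_tensor_prod psd_labelled simp: trace_tensor_prod trace_labelled)

lemma prod_lessThan_if_pair:
  fixes g :: "nat \<Rightarrow> 'a::comm_monoid_mult"
  assumes "i < M" "j < M" "i \<noteq> j"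
  shows "(\<Prod>k<M. if k = i \<or> k = j then g k else 1) = g i * g j"
proof -
  have "(\<Prod>k<M. if k = i \<or> k = j then g k else 1) = (\<Prod>k\<in>{..<M} \<inter> {k. k = i \<or> k = j}. g k)"
    by (simp add: prod.If_cases)
  also have "{..<M} \<inter> {k. k = i \<or> k = j} = {i, j}" using assms by auto
  finally show ?thesis using assms by simp
qed

lemma sum_PiE_prod_coords_eq:
  fixes p :: "'z::finite \<Rightarrow> real" and i j M :: nat
  assumes "(\<Sum>z\<in>UNIV. p z) = 1" "i < M" "j < M" "i \<noteq> j"
  shows "(\<Sum>\<zeta>\<in>PiE {..<M} (\<lambda>_. UNIV). if \<zeta> i = \<zeta> j then \<Prod>k<M. p (\<zeta> k) else 0) = (\<Sum>z\<in>UNIV. p z ^ 2)"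
proof -
  define F where "F z k y = p y * (if k = i \<or> k = j then of_bool (y = z) else 1)" for z k y
  have "(\<Prod>k<M. F z k (\<zeta> k)) = of_bool (\<zeta> i = z) * of_bool (\<zeta> j = z) * (\<Prod>k<M. p (\<zeta> k))" for z \<zeta>
    unfolding F_def prod.distrib prod_lessThan_if_pair[OF assms(2-4), of "\<lambda>k. of_bool (\<zeta> k = z)"]
    by simp
  then have "(\<Sum>z\<in>UNIV. \<Prod>k<M. F z k (\<zeta> k)) =
      (\<Sum>z\<in>UNIV. if z = \<zeta> i then of_bool (\<zeta> i = \<zeta> j) * (\<Prod>k<M. p (\<zeta> k)) else 0)" for \<zeta>
    by (intro sum.cong refl) auto
  then have "(if \<zeta> i = \<zeta> j then \<Prod>k<M. p (\<zeta> k) else 0) = (\<Sum>z\<in>UNIV. \<Prod>k<M. F z k (\<zeta> k))" for \<zeta>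
    by simp
  then have "(\<Sum>\<zeta>\<in>PiE {..<M} (\<lambda>_. UNIV). if \<zeta> i = \<zeta> j then \<Prod>k<M. p (\<zeta> k) else 0) =
      (\<Sum>z\<in>UNIV. \<Prod>k<M. \<Sum>y\<in>UNIV. F z k y)"
    by (simp add: sum.swap[of _ "PiE {..<M} (\<lambda>_. UNIV)"] prod_sum_PiE)
  also have "\<dots> = (\<Sum>z\<in>UNIV. \<Prod>k<M. if k = i \<or> k = j then p z else 1)"
    unfolding F_def using assms(1) by (intro sum.cong prod.cong refl) auto
  finally show ?thesis
    by (simp add: prod_lessThan_if_pair[OF assms(2-4)] power2_eq_square)
qed

lemma sum_PiE_prod_not_inj_on_le:
  fixes p :: "'z::finite \<Rightarrow> real"
  assumes p_nonneg: "\<And>z. p z \<ge> 0" and p_sum: "(\<Sum>z\<in>UNIV. p z) = 1"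
  shows "(\<Sum>\<zeta>\<in>{\<zeta> \<in> PiE {..<M} (\<lambda>_. UNIV). \<not> inj_on \<zeta> {..<M}}. \<Prod>k<M. p (\<zeta> k)) \<le>
    real M ^ 2 * (\<Sum>z\<in>UNIV. p z ^ 2)"
proof -
  let ?P = "PiE {..<M} (\<lambda>_. UNIV) :: (nat \<Rightarrow> 'z) set"
  define pw where "pw \<zeta> = (\<Prod>k<M. p (\<zeta> k))" for \<zeta> :: "nat \<Rightarrow> 'z"
  define collisions where "collisions \<zeta> = (\<Sum>i<M. \<Sum>j<M. if i \<noteq> j \<and> \<zeta> i = \<zeta> j then 1 else 0 :: real)"
    for \<zeta> :: "nat \<Rightarrow> 'z"
  have pw_nonneg: "pw \<zeta> \<ge> 0" for \<zeta> unfolding pw_def by (simp add: prod_nonneg p_nonneg)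
  have collisions_ge_1: "1 \<le> collisions \<zeta>" if not_inj: "\<not> inj_on \<zeta> {..<M}" for \<zeta>
  proof -
    obtain i j where ij: "i < M" "j < M" "i \<noteq> j" "\<zeta> i = \<zeta> j"
      using not_inj unfolding inj_on_def by auto
    have "(1::real) \<le> (\<Sum>j'<M. if i \<noteq> j' \<and> \<zeta> i = \<zeta> j' then 1 else 0)"
      using member_le_sum[of j "{..<M}" "\<lambda>j'. if i \<noteq> j' \<and> \<zeta> i = \<zeta> j' then 1 else 0 :: real"] ij by simp
    also have "\<dots> \<le> collisions \<zeta>"
      unfolding collisions_def using ij
      by (intro member_le_sum[of i "{..<M}" "\<lambda>i. \<Sum>j'<M. if i \<noteq> j' \<and> \<zeta> i = \<zeta> j' then 1 else 0"])
        (auto intro: sum_nonneg)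
    finally show ?thesis .
  qed
  \<comment> \<open>union bound over the pairs of positions that collide\<close>
  have "(\<Sum>\<zeta>\<in>{\<zeta> \<in> ?P. \<not> inj_on \<zeta> {..<M}}. pw \<zeta>) \<le>
      (\<Sum>\<zeta>\<in>{\<zeta> \<in> ?P. \<not> inj_on \<zeta> {..<M}}. pw \<zeta> * collisions \<zeta>)"
    using mult_left_mono[OF collisions_ge_1 pw_nonneg] by (intro sum_mono) auto
  also have "\<dots> \<le> (\<Sum>\<zeta>\<in>?P. pw \<zeta> * collisions \<zeta>)"
    using pw_nonneg by (intro sum_mono2) (auto simp: finite_PiE collisions_def sum_nonneg)
  also have "\<dots> = (\<Sum>i<M. \<Sum>j<M. \<Sum>\<zeta>\<in>?P. if i \<noteq> j \<and> \<zeta> i = \<zeta> j then pw \<zeta> else 0)"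
    unfolding collisions_def sum_distrib_left
    by (simp add: sum.swap[of _ ?P] if_distrib[of "\<lambda>x. pw _ * x"] cong: if_cong)
  also have "\<dots> = (\<Sum>i<M. \<Sum>j<M. if i \<noteq> j then (\<Sum>z\<in>UNIV. p z ^ 2) else 0)"
    unfolding pw_def using sum_PiE_prod_coords_eq[OF p_sum] by (intro sum.cong refl) auto
  also have "\<dots> \<le> (\<Sum>i<M. \<Sum>j<M. (\<Sum>z\<in>UNIV. p z ^ 2))"
    by (intro sum_mono) (auto intro: sum_nonneg)
  also have "\<dots> = real M ^ 2 * (\<Sum>z\<in>UNIV. p z ^ 2)" by (simp add: power2_eq_square)
  finally show ?thesis unfolding pw_def .
qed

lemma diag_minus_mixture_le:
  fixes pw :: "'a \<Rightarrow> real" and T :: "'a \<Rightarrow> 'a \<Rightarrow> real"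
  assumes "finite P"
    and pw_nonneg: "\<And>x. x \<in> P \<Longrightarrow> pw x \<ge> 0" and pw_sum: "(\<Sum>x\<in>P. pw x) = 1"
    and T_nonneg: "\<And>x y. x \<in> P \<Longrightarrow> y \<in> P \<Longrightarrow> T x y \<ge> 0"
    and T_le_1: "\<And>x y. x \<in> P \<Longrightarrow> y \<in> P \<Longrightarrow> T x y \<le> 1"
    and T_good: "\<And>x y. x \<in> P \<Longrightarrow> y \<in> P \<Longrightarrow> good x \<Longrightarrow> good y \<Longrightarrow> T x y = T y y"
    and bad_mass: "(\<Sum>x\<in>{x \<in> P. \<not> good x}. pw x) \<le> K"
  shows "(\<Sum>x\<in>P. pw x * T x x) - (\<Sum>x\<in>P. \<Sum>y\<in>P. pw x * pw y * T x y) \<le> 2 * K"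
proof -
  define D where "D = {x \<in> P. good x}"
  define c where "c = (\<Sum>x\<in>P - D. pw x)"
  define S where "S = (\<Sum>x\<in>D. pw x * T x x)"
  have "D \<subseteq> P" unfolding D_def by blast
  have split: "(\<Sum>x\<in>P. g x) = (\<Sum>x\<in>P - D. g x) + (\<Sum>x\<in>D. g x)" for g :: "'a \<Rightarrow> real"
    using \<open>D \<subseteq> P\<close> assms(1) by (rule sum.subset_diff)
  have "c \<ge> 0" unfolding c_def using pw_nonneg by (auto intro: sum_nonneg)
  have "P - D = {x \<in> P. \<not> good x}" unfolding D_def by blast
  then have "c \<le> K" using bad_mass unfolding c_def by simp
  have pw_D: "(\<Sum>x\<in>D. pw x) = 1 - c" using split[of pw] pw_sum unfolding c_def by simp
  have "S \<le> 1 - c" unfolding S_def pw_D[symmetric]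
    using \<open>D \<subseteq> P\<close> pw_nonneg T_le_1 by (intro sum_mono mult_left_le) auto
  have diag: "(\<Sum>x\<in>P. pw x * T x x) \<le> S + c"
  proof -
    have "(\<Sum>x\<in>P - D. pw x * T x x) \<le> c" unfolding c_def
      using pw_nonneg T_le_1 by (intro sum_mono mult_left_le) auto
    then show ?thesis using split[of "\<lambda>x. pw x * T x x"] unfolding S_def by simp
  qed
  have mixture: "(1 - c) * S \<le> (\<Sum>x\<in>P. \<Sum>y\<in>P. pw x * pw y * T x y)"
  proof -
    have "(1 - c) * S = (\<Sum>x\<in>D. \<Sum>y\<in>D. pw x * pw y * T x y)"
      unfolding S_def pw_D[symmetric] sum_product
    proof (intro sum.cong refl)
      fix x y assume "x \<in> D" "y \<in> D"
      then show "pw x * (pw y * T y y) = pw x * pw y * T x y"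
        using T_good[of x y] unfolding D_def by simp
    qed
    also have "\<dots> \<le> (\<Sum>x\<in>D. \<Sum>y\<in>P. pw x * pw y * T x y)"
      using assms(1) \<open>D \<subseteq> P\<close> pw_nonneg T_nonneg by (intro sum_mono sum_mono2) auto
    also have "\<dots> \<le> (\<Sum>x\<in>P. \<Sum>y\<in>P. pw x * pw y * T x y)"
      using assms(1) \<open>D \<subseteq> P\<close> pw_nonneg T_nonneg by (intro sum_mono2) (auto intro!: sum_nonneg)
    finally show ?thesis .
  qed
  have "c * S \<le> c" using \<open>c \<ge> 0\<close> \<open>S \<le> 1 - c\<close> by (intro mult_left_le) auto
  then show ?thesis using diag mixture \<open>c \<le> K\<close> by (simp add: algebra_simps)
qed

theorem theorem2:
  fixes p :: "'z::finite \<Rightarrow> real"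
    and \<rho> :: "'z \<Rightarrow> 'q::finite \<Rightarrow> 'q \<Rightarrow> complex"
    and M :: nat
    and E1 :: "(nat \<Rightarrow> 'z \<times> 'q) \<Rightarrow> (nat \<Rightarrow> 'z \<times> 'q) \<Rightarrow> complex"
  assumes p_nonneg: "\<And>z. p z \<ge> 0"
    and p_sum: "(\<Sum>z\<in>UNIV. p z) = 1"
    and dens: "\<And>z. density UNIV (\<rho> z)"
    and M_pos: "M \<ge> 1"
    and E1_psd: "psd (basisM M) E1"
    and E2_psd: "psd (basisM M) (\<lambda>f g. idop f g - E1 f g)"
    and sym: "\<And>\<tau>. bij \<tau> \<Longrightarrow> \<forall>f\<in>basisM M. \<forall>g\<in>basisM M.
        mmult (basisM M) (mmult (basisM M) (perm_op M \<tau>) E1) (adjoint (perm_op M \<tau>)) f g = E1 f g"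
  shows "(let \<rho>1 = tensor_pow M (cq_state p \<rho>);
              \<rho>2 = tensor_pow M (cq_state p (\<lambda>_. avg_state p \<rho>));
              E2 = (\<lambda>f g. idop f g - E1 f g)
          in 1/2 * Re (trace (basisM M) (mmult (basisM M) E1 \<rho>1))
           + 1/2 * Re (trace (basisM M) (mmult (basisM M) E2 \<rho>2)))
         \<le> 1/2 + real M ^ 2 * (\<Sum>z\<in>UNIV. p z ^ 2)"
proof -
  let ?B = "basisM M :: (nat \<Rightarrow> 'z \<times> 'q) set"
  let ?P = "PiE {..<M} (\<lambda>_. UNIV) :: (nat \<Rightarrow> 'z) set"
  define pw where "pw \<zeta> = (\<Prod>i<M. p (\<zeta> i))" for \<zeta> :: "nat \<Rightarrow> 'z"
  define T where "T \<zeta> \<eta> = Re (trace ?B (mmult ?B E1 (tensor_prod M (\<lambda>i. labelled (\<zeta> i) (\<rho> (\<eta> i))))))"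
    for \<zeta> \<eta> :: "nat \<Rightarrow> 'z"
  note \<sigma>_psd = psd_labelled_prod[where \<rho> = \<rho>, OF dens]
    and \<sigma>_trace = trace_labelled_prod[where \<rho> = \<rho>, OF dens]
  have T_bounds: "0 \<le> T \<zeta> \<eta>" "T \<zeta> \<eta> \<le> 1" for \<zeta> \<eta>
    unfolding T_def using trace_mmult_psd_nonneg[OF _ E1_psd \<sigma>_psd]
      trace_mmult_effect_le_1[OF _ E2_psd \<sigma>_psd \<sigma>_trace] by (simp_all add: finite_PiE)
  have T_inj_on: "T \<zeta> \<eta> = T \<eta> \<eta>" if "inj_on \<zeta> {..<M}" "inj_on \<eta> {..<M}" for \<zeta> \<eta>
    unfolding T_def using trace_mmult_labelled_inj_on[where E = E1 and A = "\<lambda>i. \<rho> (\<eta> i)",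
        OF relabel_invariant_if_perm_op_invariant[where E = E1 and M = M, OF sym] that] by simp
  have pw_sum: "(\<Sum>\<zeta>\<in>?P. pw \<zeta>) = 1"
    unfolding pw_def using prod_sum_PiE[of "{..<M}" "\<lambda>_. UNIV" "\<lambda>_. p"] p_sum by simp
  have succ_1: "Re (trace ?B (mmult ?B E1 (tensor_pow M (cq_state p \<rho>)))) = (\<Sum>\<zeta>\<in>?P. pw \<zeta> * T \<zeta> \<zeta>)"
    unfolding tensor_pow_cq_state trace_mmult_sum trace_mmult_scale T_def pw_def
    by (simp add: Re_sum flip: of_real_prod)
  have gap: "(\<Sum>\<zeta>\<in>?P. pw \<zeta> * T \<zeta> \<zeta>) - (\<Sum>\<zeta>\<in>?P. \<Sum>\<eta>\<in>?P. pw \<zeta> * pw \<eta> * T \<zeta> \<eta>) \<le>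
      2 * (real M ^ 2 * (\<Sum>z\<in>UNIV. p z ^ 2))"
    using sum_PiE_prod_not_inj_on_le[OF p_nonneg p_sum, of M]
    by (intro diag_minus_mixture_le[OF _ _ pw_sum, where good = "\<lambda>\<zeta>. inj_on \<zeta> {..<M}"])
      (auto simp: finite_PiE pw_def prod_nonneg p_nonneg T_bounds intro: T_inj_on)
  have "Re (trace ?B (mmult ?B (\<lambda>f g. idop f g - E1 f g)
      (tensor_pow M (cq_state p (\<lambda>_. avg_state p \<rho>))))) =
      (\<Sum>\<zeta>\<in>?P. \<Sum>\<eta>\<in>?P. pw \<zeta> * pw \<eta> * (1 - T \<zeta> \<eta>))"
    unfolding tensor_pow_cq_state_avg trace_mmult_sum trace_mmult_scale trace_mmult_diff T_def pw_def
    by (simp add: Re_sum trace_mmult_idop finite_PiE \<sigma>_trace flip: of_real_prod of_real_mult)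
  also have "\<dots> = 1 - (\<Sum>\<zeta>\<in>?P. \<Sum>\<eta>\<in>?P. pw \<zeta> * pw \<eta> * T \<zeta> \<eta>)"
    using pw_sum by (simp add: right_diff_distrib sum_subtractf flip: sum_product)
  finally show ?thesis using gap unfolding Let_def succ_1 by (simp add: field_simps)
qed

end
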